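(* Let $L\ge2$, $i^*\in\{1,\dots,L-1\}$, $N\ge d_x$, and $X_\epsilon$ of rank $d_x$. Let $F:\mathbb R^{d_x}\to\mathbb R^{d_{i^*}}$ be any function, $F(X)\in\mathbb R^{d_{i^*}\times N}$ the matrix with columns $F(x_i)$, and $\tilde W\in\mathbb R^{d_y\times d_{i^*}}$ with $\tilde WF(X)=Y$. Assume $p\ge\mathrm{rank}\big(YX_\epsilon^T(X_\epsilon X_\epsilon^T)^{-1}\big)$ and $\min_{0\le i\le i^*}d_i\ge\mathrm{rank}\big(F(X)X_\epsilon^T(X_\epsilon X_\epsilon^T)^{-1}\big)$. Consider the loss $$\mathcal L_{st}^F(W_L,\dots,W_1)=\|W_{L:1}X_\epsilon-Y\|_F^2+\lambda\|W_{i^*:1}X_\epsilon-F(X)\|_F^2 .$$ Then every global minimizer of $\mathcal L_{base}$ and every global minimizer of $\mathcal L_{st}^F$ have end-to-end matrix $W_{L:1}=YX_\epsilon^T(X_\epsilon X_\epsilon^T)^{-1}$.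
   Context: Clean inputs $x_i\in\mathbb R^{d_x}$, targets $y_i\in\mathbb R^{d_y}$, noise $\epsilon_i\in\mathbb R^{d_x}$, $i=1,\dots,N$; $X_\epsilon$ has columns $x_i+\epsilon_i$, $Y\in\mathbb R^{d_y\times N}$ has columns $y_i$. A deep linear network with $L$ layers is a tuple $(W_L,\dots,W_1)$ with $W_i\in\mathbb R^{d_i\times d_{i-1}}$, $d_0=d_x$, $d_L=d_y$; $W_{i:j}:=W_iW_{i-1}\cdots W_j$; $p:=\min_{0\le i\le L}d_i$. Base loss: $\mathcal L_{base}(W_L,\dots,W_1)=\|W_{L:1}X_\epsilon-Y\|_F^2$. $\lambda>0$ is fixed. *)

theory Defs
  imports "Jordan_Normal_Form.Gauss_Jordan_Elimination" "Jordan_Normal_Form.DL_Rank"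
begin

definition frob_sq :: "real mat \<Rightarrow> real" where
  "frob_sq A = (\<Sum>i<dim_row A. \<Sum>j<dim_col A. (A $$ (i, j))\<^sup>2)"

definition mrank :: "real mat \<Rightarrow> nat" where
  "mrank A = vec_space.rank (dim_row A) A"

definition minv :: "real mat \<Rightarrow> real mat" where
  "minv A = the (mat_inverse A)"

text \<open>Partial products W_{k:1} = W_k W_{k-1} ... W_1 of a network W
  (layers indexed 1..L); W_{0:1} is the identity of size d_0 = n.\<close>
fun wprod :: "(nat \<Rightarrow> real mat) \<Rightarrow> nat \<Rightarrow> nat \<Rightarrow> real mat" where
  "wprod W n 0 = 1\<^sub>m n"
| "wprod W n (Suc k) = W (Suc k) * wprod W n k"

definition is_net :: "(nat \<Rightarrow> nat) \<Rightarrow> nat \<Rightarrow> (nat \<Rightarrow> real mat) \<Rightarrow> bool" where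
  "is_net d L W \<longleftrightarrow> (\<forall>i\<in>{1..L}. W i \<in> carrier_mat (d i) (d (i - 1)))"

definition pmin :: "(nat \<Rightarrow> nat) \<Rightarrow> nat \<Rightarrow> nat" where
  "pmin d L = Min (d ` {0..L})"

definition apply_cols :: "(real vec \<Rightarrow> real vec) \<Rightarrow> nat \<Rightarrow> real mat \<Rightarrow> real mat" where
  "apply_cols F m X = mat m (dim_col X) (\<lambda>(r, c). F (col X c) $ r)"

definition loss_base :: "(nat \<Rightarrow> nat) \<Rightarrow> nat \<Rightarrow> real mat \<Rightarrow> real mat \<Rightarrow> (nat \<Rightarrow> real mat) \<Rightarrow> real" where
  "loss_base d L Xe Y W = frob_sq (wprod W (d 0) L * Xe - Y)"

definition loss_st :: "(nat \<Rightarrow> nat) \<Rightarrow> nat \<Rightarrow> nat \<Rightarrow> real \<Rightarrow> real mat \<Rightarrow> real mat \<Rightarrow> real mat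
    \<Rightarrow> (nat \<Rightarrow> real mat) \<Rightarrow> real" where
  "loss_st d L istar lam Xe Y FX W =
     frob_sq (wprod W (d 0) L * Xe - Y) + lam * frob_sq (wprod W (d 0) istar * Xe - FX)"

definition is_global_min :: "(nat \<Rightarrow> nat) \<Rightarrow> nat \<Rightarrow> ((nat \<Rightarrow> real mat) \<Rightarrow> real)
    \<Rightarrow> (nat \<Rightarrow> real mat) \<Rightarrow> bool" where
  "is_global_min d L f W \<longleftrightarrow> is_net d L W \<and> (\<forall>V. is_net d L V \<longrightarrow> f W \<le> f V)"

end

(*
  Both losses depend on the network only through the products W_{L:1} and W_{i*:1}, and
  W |-> ||W X_eps - Y||^2 has the unique minimiser M = Y X_eps^T (X_eps X_eps^T)^-1: by the
  normal equations the residual M X_eps - Y is orthogonal to the rows of X_eps, so the loss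
  splits as ||(W - M) X_eps||^2 + ||M X_eps - Y||^2, and X_eps has full row rank.
  A matrix of rank at most the minimal width is the product of some network (factor it through
  its column space and pad with rectangular identities), so M is attained and every global
  minimiser of L_base has W_{L:1} = M. For L_st a single network minimises both terms at once:
  its first i* layers realise the least-squares fit G of F(X), and the remaining layers realise
  W~, since W~ G = M because W~ F(X) = Y. Hence a global minimiser of L_st has
  ||W_{L:1} X_eps - Y||^2 <= ||M X_eps - Y||^2, which forces W_{L:1} = M.
*)
theory Submission
  imports Defs
begin

section \<open>Frobenius norm\<close>

lemma frob_sq_nonneg: "frob_sq A \<ge> 0"
  unfolding frob_sq_def by (intro sum_nonneg) auto

lemma frob_sq_eq_0:
  assumes A: "A \<in> carrier_mat m n" and "frob_sq A = 0"
  shows "A = 0\<^sub>m m n"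
proof (rule eq_matI)
  fix i j assume "i < dim_row (0\<^sub>m m n :: real mat)" "j < dim_col (0\<^sub>m m n :: real mat)"
  then have ij: "i < m" "j < n" by auto
  have "\<forall>i\<in>{..<m}. (\<Sum>j<n. (A $$ (i, j))\<^sup>2) = 0"
    using assms unfolding frob_sq_def by (subst sum_nonneg_eq_0_iff[symmetric]) (auto intro: sum_nonneg)
  then have "\<forall>j\<in>{..<n}. (A $$ (i, j))\<^sup>2 = 0"
    using ij by (subst sum_nonneg_eq_0_iff[symmetric]) auto
  then show "A $$ (i, j) = 0\<^sub>m m n $$ (i, j)" using ij by auto
qed (use A in auto)

lemma frob_sq_add_orthogonal:
  fixes Q D X :: "real mat"
  assumes Q: "Q \<in> carrier_mat m n" and D: "D \<in> carrier_mat m k" and X: "X \<in> carrier_mat k n"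
    and QX: "Q * transpose_mat X = 0\<^sub>m m k"
  shows "frob_sq (D * X + Q) = frob_sq (D * X) + frob_sq Q"
proof -
  define P where "P = D * X"
  have P: "P \<in> carrier_mat m n" using D X by (simp add: P_def)
  have inner_row: "(\<Sum>j<n. (\<Sum>l<k. D $$ (i, l) * X $$ (l, j)) * Q $$ (i, j)) = 0" if i: "i < m" for i
  proof -
    have "(\<Sum>j<n. (\<Sum>l<k. D $$ (i, l) * X $$ (l, j)) * Q $$ (i, j))
        = (\<Sum>l<k. D $$ (i, l) * (\<Sum>j<n. Q $$ (i, j) * X $$ (l, j)))"
      by (simp add: sum_distrib_left sum_distrib_right mult_ac sum.swap[of _ "{..<n}"])
    also have "\<dots> = (\<Sum>l<k. D $$ (i, l) * (Q * transpose_mat X) $$ (i, l))"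
      using i Q X by (intro sum.cong) (auto simp: scalar_prod_def atLeast0LessThan)
    also have "\<dots> = 0" using QX i by simp
    finally show ?thesis .
  qed
  have "(\<Sum>j<n. P $$ (i, j) * Q $$ (i, j)) = 0" if "i < m" for i
    using D X inner_row[OF that] that unfolding P_def
    by (auto simp: scalar_prod_def atLeast0LessThan intro!: sum.cong)
  then have cross: "(\<Sum>i<m. \<Sum>j<n. P $$ (i, j) * Q $$ (i, j)) = 0" by simp
  have "frob_sq (P + Q) = (\<Sum>i<m. \<Sum>j<n. (P $$ (i, j))\<^sup>2 + (Q $$ (i, j))\<^sup>2 + 2 * (P $$ (i, j) * Q $$ (i, j)))"
    unfolding frob_sq_def using P Q by (intro sum.cong refl) (auto simp: power2_sum)
  also have "\<dots> = frob_sq P + frob_sq Q + 2 * (\<Sum>i<m. \<Sum>j<n. P $$ (i, j) * Q $$ (i, j))"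
    unfolding frob_sq_def using P Q by (simp add: sum.distrib sum_distrib_left)
  finally show ?thesis using cross unfolding P_def by simp
qed

section \<open>Column bases and Gram matrices\<close>

lemma scalar_prod_self_eq_0:
  fixes w :: "real vec"
  assumes "w \<in> carrier_vec m" "w \<bullet> w = 0"
  shows "w = 0\<^sub>v m"
proof -
  have "(\<Sum>i\<in>{0..<m}. w $ i * w $ i) = 0" using assms unfolding scalar_prod_def by auto
  then have "\<forall>i\<in>{0..<m}. w $ i * w $ i = 0"
    by (subst sum_nonneg_eq_0_iff[symmetric]) auto
  then show ?thesis using assms by (intro eq_vecI) auto
qed

lemma gram_mult_vec_eq_0:
  fixes A :: "real mat"
  assumes A: "A \<in> carrier_mat m n" and v: "v \<in> carrier_vec n"
    and "(transpose_mat A * A) *\<^sub>v v = 0\<^sub>v n"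
  shows "A *\<^sub>v v = 0\<^sub>v m"
proof -
  have w: "A *\<^sub>v v \<in> carrier_vec m" using A v by auto
  have "transpose_mat A *\<^sub>v (A *\<^sub>v v) = 0\<^sub>v n"
    using assms by (simp add: assoc_mult_mat_vec[of _ n m])
  then have "(A *\<^sub>v v) \<bullet> (A *\<^sub>v v) = 0"
    using transpose_vec_mult_scalar[OF A v w] v by simp
  then show ?thesis using scalar_prod_self_eq_0 w by blast
qed

lemma minv_inverse:
  fixes A :: "real mat"
  assumes A: "A \<in> carrier_mat n n"
    and ker: "\<And>v. v \<in> carrier_vec n \<Longrightarrow> A *\<^sub>v v = 0\<^sub>v n \<Longrightarrow> v = 0\<^sub>v n"
  shows "minv A \<in> carrier_mat n n" "A * minv A = 1\<^sub>m n" "minv A * A = 1\<^sub>m n"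
proof -
  have "det A \<noteq> 0" using det_0_iff_vec_prod_zero_field[OF A] ker by blast
  then have "A \<in> Units (ring_mat TYPE(real) n ())" by (rule det_non_zero_imp_unit[OF A])
  then obtain B where B: "mat_inverse A = Some B" using mat_inverse(1)[OF A] by fastforce
  from mat_inverse(2)[OF A B]
  show "minv A \<in> carrier_mat n n" "A * minv A = 1\<^sub>m n" "minv A * A = 1\<^sub>m n"
    unfolding minv_def B by simp_all
qed

lemma column_basis_exists:
  fixes M :: "real mat"
  assumes M: "M \<in> carrier_mat m n"
  obtains U where "U \<in> carrier_mat m (mrank M)" "set (cols U) \<subseteq> set (cols M)"
    "\<And>c. c \<in> set (cols M) \<Longrightarrow> \<exists>w\<in>carrier_vec (mrank M). c = U *\<^sub>v w"
    "\<And>v. v \<in> carrier_vec (mrank M) \<Longrightarrow> U *\<^sub>v v = 0\<^sub>v m \<Longrightarrow> v = 0\<^sub>v (mrank M)"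
proof -
  interpret vec_space "TYPE(real)" m .
  obtain S where S: "maximal S (\<lambda>T. T \<subseteq> set (cols M) \<and> lin_indpt T)"
    using maximal_exists[of "\<lambda>T. T \<subseteq> set (cols M) \<and> lin_indpt T" "card (set (cols M))" "{}"]
    by (meson List.finite_set card_mono empty_iff empty_subsetI finite_lin_indpt2 rev_finite_subset)
  have Ssub: "S \<subseteq> set (cols M)" and Sli: "lin_indpt S" using S unfolding maximal_def by auto
  obtain ss where ss: "distinct ss" "set ss = S"
    using finite_distinct_list[OF finite_subset[OF Ssub]] by auto
  have colsM: "set (cols M) \<subseteq> carrier_vec m" using M cols_dim by blast
  have ss_carrier: "set ss \<subseteq> carrier_vec m" using ss Ssub colsM by auto
  have len: "length ss = mrank M"
    using rank_card_indpt[OF M S] ss distinct_card M unfolding mrank_def by fastforce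
  define U where "U = mat_of_cols m ss"
  have U: "U \<in> carrier_mat m (mrank M)" unfolding U_def using len mat_of_cols_carrier(1) by metis
  have cols_U: "cols U = ss" unfolding U_def using ss_carrier by simp
  show thesis
  proof
    show "U \<in> carrier_mat m (mrank M)" by (fact U)
    show "set (cols U) \<subseteq> set (cols M)" using cols_U ss Ssub by simp
  next
    fix c assume c: "c \<in> set (cols M)"
    have "c \<in> span S"
    proof (cases "c \<in> S")
      case True then show ?thesis using in_own_span Ssub colsM by blast
    next
      case False
      have "\<not> lin_indpt (S \<union> {c})" using S c False unfolding maximal_def by blast
      then show ?thesis using lin_dep_iff_in_span[of S c] Ssub colsM Sli c False by auto
    qed
    then obtain f where "c = lincomb_list f ss"
      using span_list_as_span[OF ss_carrier] ss unfolding span_list_def by auto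
    also have "\<dots> = U *\<^sub>v vec (length ss) f"
      unfolding U_def by (rule lincomb_list_as_mat_mult) (use ss_carrier in auto)
    finally show "\<exists>w\<in>carrier_vec (mrank M). c = U *\<^sub>v w" using len by auto
  next
    fix v assume v: "v \<in> carrier_vec (mrank M)" "U *\<^sub>v v = 0\<^sub>v m"
    show "v = 0\<^sub>v (mrank M)"
    proof (rule ccontr)
      assume "v \<noteq> 0\<^sub>v (mrank M)"
      then have "lin_dep (set (cols U))"
        using lin_depI[OF U v(1) _ v(2)] cols_U ss by auto
      then show False using Sli cols_U ss by auto
    qed
  qed
qed

lemma column_basis_factorization:
  fixes M :: "real mat"
  assumes M: "M \<in> carrier_mat m n"
  obtains U C where "U \<in> carrier_mat m (mrank M)" "C \<in> carrier_mat (mrank M) n" "M = U * C"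
    "\<And>v. v \<in> carrier_vec (mrank M) \<Longrightarrow> U *\<^sub>v v = 0\<^sub>v m \<Longrightarrow> v = 0\<^sub>v (mrank M)"
proof -
  obtain U where U: "U \<in> carrier_mat m (mrank M)"
    and span: "\<And>c. c \<in> set (cols M) \<Longrightarrow> \<exists>w\<in>carrier_vec (mrank M). c = U *\<^sub>v w"
    and ker: "\<And>v. v \<in> carrier_vec (mrank M) \<Longrightarrow> U *\<^sub>v v = 0\<^sub>v m \<Longrightarrow> v = 0\<^sub>v (mrank M)"
    using column_basis_exists[OF M] by metis
  have "\<exists>w\<in>carrier_vec (mrank M). col M j = U *\<^sub>v w" if "j < n" for j
    using span[of "col M j"] that M by (metis carrier_matD(2) cols_length cols_nth nth_mem)
  then obtain w where w: "\<And>j. j < n \<Longrightarrow> w j \<in> carrier_vec (mrank M) \<and> col M j = U *\<^sub>v w j"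
    by metis
  define C where "C = mat (mrank M) n (\<lambda>(i, j). w j $ i)"
  have col_C: "col C j = w j" if "j < n" for j
    using w[OF that] that unfolding C_def by (intro eq_vecI) auto
  have "M = U * C"
  proof (rule eq_matI)
    fix i j assume "i < dim_row (U * C)" "j < dim_col (U * C)"
    then have ij: "i < m" "j < n" using U unfolding C_def by auto
    then have "(U * C) $$ (i, j) = (U *\<^sub>v w j) $ i" using U col_C unfolding C_def by simp
    moreover have "M $$ (i, j) = col M j $ i" using ij M by simp
    ultimately show "M $$ (i, j) = (U * C) $$ (i, j)" using w[of j] ij by simp
  qed (use U M in \<open>auto simp: C_def\<close>)
  moreover have "C \<in> carrier_mat (mrank M) n" unfolding C_def by simp
  ultimately show thesis using that U ker by blast
qed

lemma left_inverse_of_injective: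
  fixes U :: "real mat"
  assumes U: "U \<in> carrier_mat m r"
    and ker: "\<And>v. v \<in> carrier_vec r \<Longrightarrow> U *\<^sub>v v = 0\<^sub>v m \<Longrightarrow> v = 0\<^sub>v r"
  obtains K where "K \<in> carrier_mat r m" "K * U = 1\<^sub>m r"
proof
  let ?G = "transpose_mat U * U"
  have G: "?G \<in> carrier_mat r r" using U by auto
  have "minv ?G \<in> carrier_mat r r" "minv ?G * ?G = 1\<^sub>m r"
    using minv_inverse[OF G] gram_mult_vec_eq_0[OF U] ker by blast+
  then show "minv ?G * transpose_mat U \<in> carrier_mat r m"
    and "minv ?G * transpose_mat U * U = 1\<^sub>m r"
    using U by (auto simp: assoc_mult_mat[of _ r r _ m _ r])
qed

lemma column_space_projection:
  fixes M :: "real mat"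
  assumes M: "M \<in> carrier_mat m n"
  obtains U K where "U \<in> carrier_mat m (mrank M)" "K \<in> carrier_mat (mrank M) m" "U * K * M = M"
proof -
  obtain U C where U: "U \<in> carrier_mat m (mrank M)" and C: "C \<in> carrier_mat (mrank M) n"
    and MUC: "M = U * C"
    and ker: "\<And>v. v \<in> carrier_vec (mrank M) \<Longrightarrow> U *\<^sub>v v = 0\<^sub>v m \<Longrightarrow> v = 0\<^sub>v (mrank M)"
    using column_basis_factorization[OF M] by metis
  obtain K where K: "K \<in> carrier_mat (mrank M) m" and KU: "K * U = 1\<^sub>m (mrank M)"
    using left_inverse_of_injective[OF U ker] by metis
  have "U * K * M = U * (K * U * C)"
    using assoc_mult_mat[OF U K M] assoc_mult_mat[OF K U C] MUC by simp
  also have "\<dots> = M" using KU C MUC by simp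
  finally show thesis using that U K by blast
qed

lemma gram_minv_full_row_rank:
  fixes X :: "real mat"
  assumes X: "X \<in> carrier_mat m n" and rk: "mrank X = m"
  shows "minv (X * transpose_mat X) \<in> carrier_mat m m"
    "X * transpose_mat X * minv (X * transpose_mat X) = 1\<^sub>m m"
    "minv (X * transpose_mat X) * (X * transpose_mat X) = 1\<^sub>m m"
proof -
  obtain B where B: "B \<in> carrier_mat m m" and cols_B: "set (cols B) \<subseteq> set (cols X)"
    and ker: "\<And>v. v \<in> carrier_vec m \<Longrightarrow> B *\<^sub>v v = 0\<^sub>v m \<Longrightarrow> v = 0\<^sub>v m"
    using column_basis_exists[OF X, unfolded rk] by metis
  have "det B \<noteq> 0" using det_0_iff_vec_prod_zero_field[OF B] ker by blast
  then have "det (transpose_mat B) \<noteq> 0" using det_transpose[OF B] by simp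
  moreover have BT: "transpose_mat B \<in> carrier_mat m m" using B by simp
  ultimately have ker_BT: "v = 0\<^sub>v m"
    if "v \<in> carrier_vec m" "transpose_mat B *\<^sub>v v = 0\<^sub>v m" for v
    using det_0_iff_vec_prod_zero_field[OF BT] that by blast
  have ker_gram: "v = 0\<^sub>v m" if v: "v \<in> carrier_vec m" "(X * transpose_mat X) *\<^sub>v v = 0\<^sub>v m" for v
  proof -
    have XT: "transpose_mat X *\<^sub>v v = 0\<^sub>v n"
      using gram_mult_vec_eq_0[of "transpose_mat X" n m v] X v by simp
    have "transpose_mat B *\<^sub>v v = 0\<^sub>v m"
    proof (rule eq_vecI)
      fix k assume "k < dim_vec (0\<^sub>v m :: real vec)"
      then have k: "k < m" by simp
      have "col B k \<in> set (cols B)" using k B by (simp add: cols_def)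
      then obtain j where j: "j < n" "col B k = col X j"
        using cols_B X by (auto simp: cols_def)
      have "(transpose_mat B *\<^sub>v v) $ k = col X j \<bullet> v" using k B j by simp
      also have "\<dots> = (transpose_mat X *\<^sub>v v) $ j" using j X by simp
      also have "\<dots> = 0" using XT j by simp
      finally show "(transpose_mat B *\<^sub>v v) $ k = 0\<^sub>v m $ k" using k by simp
    qed (use B in simp)
    then show ?thesis using ker_BT v by blast
  qed
  have gram: "X * transpose_mat X \<in> carrier_mat m m" using X by simp
  show "minv (X * transpose_mat X) \<in> carrier_mat m m"
    "X * transpose_mat X * minv (X * transpose_mat X) = 1\<^sub>m m"
    "minv (X * transpose_mat X) * (X * transpose_mat X) = 1\<^sub>m m"
    by (rule minv_inverse[OF gram]; fact ker_gram)+
qed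

section \<open>Least squares\<close>

definition lsq :: "real mat \<Rightarrow> real mat \<Rightarrow> real mat" where
  "lsq X Y = Y * transpose_mat X * minv (X * transpose_mat X)"

lemma lsq_carrier:
  assumes "X \<in> carrier_mat m n" "Y \<in> carrier_mat k n" "mrank X = m"
  shows "lsq X Y \<in> carrier_mat k m"
  using assms gram_minv_full_row_rank(1)[OF assms(1,3)] unfolding lsq_def by simp

lemma mult_lsq:
  assumes "A \<in> carrier_mat l k" "X \<in> carrier_mat m n" "Y \<in> carrier_mat k n" "mrank X = m"
  shows "A * lsq X Y = lsq X (A * Y)"
  using assms gram_minv_full_row_rank(1)[OF assms(2,4)] unfolding lsq_def
  by (simp add: assoc_mult_mat[of A l k _ m] assoc_mult_mat[of A l k Y n])

lemma frob_sq_residual_lsq: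
  assumes X: "X \<in> carrier_mat m n" and rk: "mrank X = m"
    and Y: "Y \<in> carrier_mat k n" and W: "W \<in> carrier_mat k m"
  shows "frob_sq (W * X - Y) = frob_sq ((W - lsq X Y) * X) + frob_sq (lsq X Y * X - Y)"
proof -
  let ?M = "lsq X Y" and ?G = "X * transpose_mat X" and ?Gi = "minv (X * transpose_mat X)"
  have XT: "transpose_mat X \<in> carrier_mat n m" using X by simp
  have Gi: "?Gi \<in> carrier_mat m m" "?Gi * ?G = 1\<^sub>m m" using gram_minv_full_row_rank[OF X rk] by auto
  have M: "?M \<in> carrier_mat k m" using lsq_carrier[OF X Y rk] .
  have YXT: "Y * transpose_mat X \<in> carrier_mat k m" using Y XT by simp
  have "?M * X * transpose_mat X = Y * transpose_mat X * (?Gi * ?G)"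
    using assoc_mult_mat[OF M X XT] assoc_mult_mat[OF YXT Gi(1), of ?G m] X
    by (simp add: lsq_def)
  also have "\<dots> = Y * transpose_mat X" using right_mult_one_mat[OF YXT] Gi by simp
  finally have normal_eq: "?M * X * transpose_mat X = Y * transpose_mat X" .
  have orth: "(?M * X - Y) * transpose_mat X = 0\<^sub>m k m"
    using normal_eq M X Y XT by (simp add: minus_mult_distrib_mat[of _ k n _ _ m])
  have "W * X - Y = (W - ?M) * X + (?M * X - Y)"
    using W M X Y by (auto simp: minus_mult_distrib_mat[of _ k m _ _ n] intro!: eq_matI)
  moreover have "?M * X - Y \<in> carrier_mat k n" using Y by (rule minus_carrier_mat)
  moreover have D: "W - ?M \<in> carrier_mat k m" using M by (rule minus_carrier_mat)
  ultimately show ?thesis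
    using frob_sq_add_orthogonal[OF _ D X orth] by simp
qed

lemma lsq_minimal:
  assumes "X \<in> carrier_mat m n" "mrank X = m" "Y \<in> carrier_mat k n" "W \<in> carrier_mat k m"
  shows "frob_sq (lsq X Y * X - Y) \<le> frob_sq (W * X - Y)"
  using frob_sq_residual_lsq[OF assms] frob_sq_nonneg[of "(W - lsq X Y) * X"] by linarith

lemma lsq_unique_minimizer:
  assumes X: "X \<in> carrier_mat m n" and rk: "mrank X = m"
    and Y: "Y \<in> carrier_mat k n" and W: "W \<in> carrier_mat k m"
    and le: "frob_sq (W * X - Y) \<le> frob_sq (lsq X Y * X - Y)"
  shows "W = lsq X Y"
proof -
  let ?D = "W - lsq X Y" and ?G = "X * transpose_mat X" and ?Gi = "minv (X * transpose_mat X)"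
  have M: "lsq X Y \<in> carrier_mat k m" using lsq_carrier[OF X Y rk] .
  then have D: "?D \<in> carrier_mat k m" by (rule minus_carrier_mat)
  have Gi: "?Gi \<in> carrier_mat m m" "?G * ?Gi = 1\<^sub>m m" using gram_minv_full_row_rank[OF X rk] by auto
  have "frob_sq (?D * X) = 0"
    using frob_sq_residual_lsq[OF X rk Y W] le frob_sq_nonneg[of "?D * X"] by linarith
  then have "?D * X = 0\<^sub>m k n" using frob_sq_eq_0[of "?D * X" k n] D X by simp
  then have "?D * ?G = 0\<^sub>m k m" using assoc_mult_mat[OF D X, of "transpose_mat X" m] X by simp
  then have D0: "?D = 0\<^sub>m k m"
    using assoc_mult_mat[OF D _ Gi(1), of ?G] right_mult_one_mat[OF D] Gi D X by simp
  have "W $$ (i, j) = lsq X Y $$ (i, j)" if "i < k" "j < m" for i j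
    using arg_cong[OF D0, of "\<lambda>A. A $$ (i, j)"] that W M by simp
  then show ?thesis using W M by (intro eq_matI) auto
qed

section \<open>Matrices realised by deep linear networks\<close>

definition rect_id :: "nat \<Rightarrow> nat \<Rightarrow> real mat" where
  "rect_id m n = mat m n (\<lambda>(i, j). if i = j then 1 else 0)"

lemma rect_id_carrier [simp]: "rect_id m n \<in> carrier_mat m n"
  unfolding rect_id_def by simp

lemma rect_id_mult_rect_id:
  assumes "r \<le> n"
  shows "rect_id r n * rect_id n r = 1\<^sub>m r"
proof (rule eq_matI)
  fix i j assume "i < dim_row (1\<^sub>m r)" "j < dim_col (1\<^sub>m r)"
  then have ij: "i < r" "j < r" "i < n" "j < n" using assms by auto
  have "(rect_id r n * rect_id n r) $$ (i, j) = (\<Sum>k<n. (if i = k then 1 else 0) * (if k = j then 1 else 0))"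
    using ij unfolding rect_id_def by (auto simp: scalar_prod_def atLeast0LessThan intro!: sum.cong)
  also have "\<dots> = (\<Sum>k<n. if k = i then (if i = j then 1 else 0) else 0)"
    by (rule sum.cong) auto
  also have "\<dots> = 1\<^sub>m r $$ (i, j)" using ij by (simp add: sum.delta)
  finally show "(rect_id r n * rect_id n r) $$ (i, j) = 1\<^sub>m r $$ (i, j)" .
qed (auto simp: rect_id_def)

lemma wprod_carrier:
  assumes "is_net d L W" "k \<le> L"
  shows "wprod W (d 0) k \<in> carrier_mat (d k) (d 0)"
  using assms(2)
proof (induction k)
  case (Suc k)
  have "W (Suc k) \<in> carrier_mat (d (Suc k)) (d k)"
    using assms(1) Suc.prems unfolding is_net_def by force
  then show ?case using Suc by auto
qed simp

lemma is_net_0 [simp]: "is_net d 0 W"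
  unfolding is_net_def by simp

text \<open>Layers \<open>a + 1, \<dots>, b\<close> route \<open>U * V\<close> through width \<open>r\<close>; the rectangular identities
  between \<open>U\<close> and \<open>V\<close> telescope away because \<open>rect_id r (d i) * rect_id (d i) r = 1\<^sub>m r\<close>
  for \<open>r \<le> d i\<close>.\<close>
definition bottleneck_net ::
    "(nat \<Rightarrow> nat) \<Rightarrow> nat \<Rightarrow> nat \<Rightarrow> nat \<Rightarrow> real mat \<Rightarrow> real mat \<Rightarrow> (nat \<Rightarrow> real mat) \<Rightarrow> nat \<Rightarrow> real mat"
  where
  "bottleneck_net d a b r U V W0 i =
     (if a < i \<and> i \<le> b then
        (if i = b then U else rect_id (d i) r) * (if i = Suc a then V else rect_id r (d (i - 1)))
      else W0 i)"

lemma wprod_bottleneck_net_below: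
  "k \<le> a \<Longrightarrow> wprod (bottleneck_net d a b r U V W0) n k = wprod W0 n k"
  by (induction k) (auto simp: bottleneck_net_def)

lemma is_net_bottleneck_net:
  assumes "is_net d a W0" "U \<in> carrier_mat (d b) r" "V \<in> carrier_mat r (d a)"
  shows "is_net d b (bottleneck_net d a b r U V W0)"
  using assms unfolding is_net_def bottleneck_net_def
  by (auto intro!: mult_carrier_mat[of _ _ r])

lemma wprod_bottleneck_net:
  assumes ab: "a < b" and r: "\<forall>i\<in>{a..b}. r \<le> d i"
    and U: "U \<in> carrier_mat (d b) r" and V: "V \<in> carrier_mat r (d a)"
    and Z: "wprod W0 n a \<in> carrier_mat (d a) n"
  shows "wprod (bottleneck_net d a b r U V W0) n b = U * V * wprod W0 n a"
proof -
  let ?W = "bottleneck_net d a b r U V W0" and ?Z = "wprod W0 n a"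
  define E where "E k = (if k = b then U else rect_id (d k) r)" for k
  have E: "E k \<in> carrier_mat (d k) r" if "k \<le> b" for k
    using U that unfolding E_def by auto
  have VZ: "V * ?Z \<in> carrier_mat r n" using V Z by simp
  have "wprod ?W n k = E k * (V * ?Z)" if "a < k" "k \<le> b" for k
    using that
  proof (induction k)
    case (Suc k)
    show ?case
    proof (cases "k = a")
      case True
      have "wprod ?W n (Suc k) = ?W (Suc a) * ?Z"
        using True wprod_bottleneck_net_below[of a a] by simp
      also have "?W (Suc a) = E (Suc a) * V"
        using Suc.prems by (simp add: bottleneck_net_def E_def)
      finally show ?thesis using assoc_mult_mat[OF E V Z] Suc.prems True by simp
    next
      case False
      then have k: "a < k" "k < b" using Suc.prems by auto
      have "?W (Suc k) = E (Suc k) * rect_id r (d k)"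
        using k by (simp add: bottleneck_net_def E_def)
      then have "wprod ?W n (Suc k) = E (Suc k) * rect_id r (d k) * (rect_id (d k) r * (V * ?Z))"
        using Suc.IH k by (simp add: E_def)
      also have "\<dots> = E (Suc k) * ((rect_id r (d k) * rect_id (d k) r) * (V * ?Z))"
        using k assoc_mult_mat[OF rect_id_carrier rect_id_carrier VZ]
        by (simp add: assoc_mult_mat[OF E rect_id_carrier mult_carrier_mat[OF rect_id_carrier VZ]])
      also have "\<dots> = E (Suc k) * (V * ?Z)"
        using rect_id_mult_rect_id[of r "d k"] r k left_mult_one_mat[OF VZ] by simp
      finally show ?thesis .
    qed
  qed simp
  from this[of b] ab show ?thesis
    using assoc_mult_mat[OF U V Z] by (simp add: E_def)
qed

lemma net_extension_realising:
  assumes W0: "is_net d a W0" and ab: "a < b" and A: "A \<in> carrier_mat (d b) (d a)"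
    and rk: "\<forall>i\<in>{a..b}. mrank (A * wprod W0 (d 0) a) \<le> d i"
  obtains W where "is_net d b W" "wprod W (d 0) a = wprod W0 (d 0) a"
    "wprod W (d 0) b = A * wprod W0 (d 0) a"
proof -
  let ?Z = "wprod W0 (d 0) a" and ?r = "mrank (A * wprod W0 (d 0) a)"
  have Z: "?Z \<in> carrier_mat (d a) (d 0)" using wprod_carrier[OF W0 order_refl] .
  have AZ: "A * ?Z \<in> carrier_mat (d b) (d 0)" using A Z by simp
  obtain U K where U: "U \<in> carrier_mat (d b) ?r" and K: "K \<in> carrier_mat ?r (d b)"
    and UK: "U * K * (A * ?Z) = A * ?Z"
    using column_space_projection[OF AZ] by metis
  have KA: "K * A \<in> carrier_mat ?r (d a)" using K A by simp
  let ?W = "bottleneck_net d a b ?r U (K * A) W0"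
  show thesis
  proof (rule that)
    show "is_net d b ?W" by (rule is_net_bottleneck_net[OF W0 U KA])
    show "wprod ?W (d 0) a = ?Z" by (rule wprod_bottleneck_net_below) simp
    have "wprod ?W (d 0) b = U * (K * A) * ?Z" by (rule wprod_bottleneck_net[OF ab rk U KA Z])
    also have "\<dots> = U * K * (A * ?Z)"
      using assoc_mult_mat[OF U K A] assoc_mult_mat[OF mult_carrier_mat[OF U K] A Z] by simp
    finally show "wprod ?W (d 0) b = A * ?Z" using UK by simp
  qed
qed

lemma net_realising:
  assumes "0 < b" and A: "A \<in> carrier_mat (d b) (d 0)" and "\<forall>i\<in>{0..b}. mrank A \<le> d i"
  obtains W where "is_net d b W" "wprod W (d 0) b = A"
  using net_extension_realising[OF is_net_0 assms(1) A] assms right_mult_one_mat[OF A] by auto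

lemma global_min_end_to_end_eq_lsq:
  assumes W: "is_global_min d L f W"
    and f: "\<And>V. is_net d L V \<Longrightarrow> f V = frob_sq (wprod V (d 0) L * X - Y) + g V"
    and V: "is_net d L V" "wprod V (d 0) L = lsq X Y"
    and g: "\<And>V'. is_net d L V' \<Longrightarrow> g V \<le> g V'"
    and X: "X \<in> carrier_mat (d 0) n" "mrank X = d 0" and Y: "Y \<in> carrier_mat (d L) n"
  shows "wprod W (d 0) L = lsq X Y"
proof (rule lsq_unique_minimizer[OF X Y])
  have W_net: "is_net d L W" and "f W \<le> f V" using W V(1) unfolding is_global_min_def by auto
  then show "frob_sq (wprod W (d 0) L * X - Y) \<le> frob_sq (lsq X Y * X - Y)"
    using f[OF W_net] f[OF V(1)] V(2) g[OF W_net] by simp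
  show "wprod W (d 0) L \<in> carrier_mat (d L) (d 0)" using wprod_carrier[OF W_net order_refl] .
qed

theorem mainTheorem9:
  fixes L istar N dx dy :: nat and d :: "nat \<Rightarrow> nat"
    and X E Y Wt :: "real mat" and F :: "real vec \<Rightarrow> real vec" and lam :: real
  assumes L: "L \<ge> 2"
    and istar: "1 \<le> istar" "istar \<le> L - 1"
    and d0: "d 0 = dx" and dL: "d L = dy"
    and N: "N \<ge> dx"
    and X: "X \<in> carrier_mat dx N" and E: "E \<in> carrier_mat dx N" and Y: "Y \<in> carrier_mat dy N"
    and rankX: "mrank (X + E) = dx"
    and F: "\<And>v. v \<in> carrier_vec dx \<Longrightarrow> F v \<in> carrier_vec (d istar)"
    and Wt: "Wt \<in> carrier_mat dy (d istar)"
    and WtF: "Wt * apply_cols F (d istar) X = Y"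
    and p: "pmin d L \<ge> mrank (Y * transpose_mat (X + E) * minv ((X + E) * transpose_mat (X + E)))"
    and q: "Min (d ` {0..istar}) \<ge>
             mrank (apply_cols F (d istar) X * transpose_mat (X + E) * minv ((X + E) * transpose_mat (X + E)))"
    and lam: "lam > 0"
  shows "(\<forall>W. is_global_min d L (loss_base d L (X + E) Y) W \<longrightarrow>
            wprod W dx L = Y * transpose_mat (X + E) * minv ((X + E) * transpose_mat (X + E)))
       \<and> (\<forall>W. is_global_min d L (loss_st d L istar lam (X + E) Y (apply_cols F (d istar) X)) W \<longrightarrow>
            wprod W dx L = Y * transpose_mat (X + E) * minv ((X + E) * transpose_mat (X + E)))"
proof -
  define Xe FX where "Xe = X + E" and "FX = apply_cols F (d istar) X"
  have Xe: "Xe \<in> carrier_mat (d 0) N" "mrank Xe = d 0" using X E rankX d0 by (simp_all add: Xe_def)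
  have Y': "Y \<in> carrier_mat (d L) N" using Y dL by simp
  have FX: "FX \<in> carrier_mat (d istar) N" using X by (simp add: FX_def apply_cols_def)
  have Wt': "Wt \<in> carrier_mat (d L) (d istar)" using Wt dL by simp
  have istar_L: "0 < istar" "istar < L" using istar L by auto
  have rk_M: "\<forall>i\<in>{0..L}. mrank (lsq Xe Y) \<le> d i"
    using p by (simp add: pmin_def lsq_def Xe_def)
  have rk_G: "\<forall>i\<in>{0..istar}. mrank (lsq Xe FX) \<le> d i"
    using q by (simp add: lsq_def Xe_def FX_def)
  have WtG: "Wt * lsq Xe FX = lsq Xe Y"
    using mult_lsq[OF Wt' Xe(1) FX Xe(2)] WtF by (simp add: FX_def)
  obtain V1 where V1: "is_net d L V1" "wprod V1 (d 0) L = lsq Xe Y"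
    using net_realising[OF _ lsq_carrier[OF Xe(1) Y' Xe(2)] rk_M] istar_L by auto
  obtain V2' where V2': "is_net d istar V2'" "wprod V2' (d 0) istar = lsq Xe FX"
    using net_realising[OF istar_L(1) lsq_carrier[OF Xe(1) FX Xe(2)] rk_G] by auto
  obtain V2 where V2: "is_net d L V2" "wprod V2 (d 0) istar = lsq Xe FX" "wprod V2 (d 0) L = lsq Xe Y"
    using net_extension_realising[OF V2'(1) istar_L(2) Wt'] V2'(2) WtG rk_M by auto
  have "wprod W (d 0) L = lsq Xe Y" if "is_global_min d L (loss_base d L Xe Y) W" for W
    using global_min_end_to_end_eq_lsq[OF that _ V1 _ Xe Y', of "\<lambda>_. 0"] by (simp add: loss_base_def)
  moreover have "wprod W (d 0) L = lsq Xe Y" if "is_global_min d L (loss_st d L istar lam Xe Y FX) W" for W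
  proof (rule global_min_end_to_end_eq_lsq[OF that _ V2(1,3) _ Xe Y'])
    fix V assume "is_net d L V"
    then have "wprod V (d 0) istar \<in> carrier_mat (d istar) (d 0)" using wprod_carrier istar_L by simp
    then show "lam * frob_sq (wprod V2 (d 0) istar * Xe - FX) \<le> lam * frob_sq (wprod V (d 0) istar * Xe - FX)"
      using lsq_minimal[OF Xe FX] V2(2) lam by simp
  qed (simp add: loss_st_def)
  ultimately show ?thesis using d0 by (simp add: Xe_def FX_def lsq_def)
qed

end
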